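(* Let $k$ be a field and $d$ a positive integer such that the characteristic of $k$ does not divide $d$ (i.e. $d\cdot 1_k\neq 0$). Then $R_1^{(d)}$ is a (two-sided) ideal of $k_0\langle X\rangle$; in particular $R_1^{(d)}=R_2^{(d)}$.
   Context: Let $X=\{x_1,x_2,\ldots\}$ be a countably infinite set and let $k_0\langle X\rangle$ denote the free associative $k$-algebra (without identity) on $X$. A $T$-space of $k_0\langle X\rangle$ is a $k$-linear subspace closed under every algebra endomorphism of $k_0\langle X\rangle$; the $T$-space generated by a subset is the smallest $T$-space containing it. For $v_1,\ldots,v_d\in k_0\langle X\rangle$, let $S_d(v_1,\ldots,v_d)=\sum_{\sigma\in\Sigma_d}\prod_{i=1}^d v_{\sigma(i)}$, where $\Sigma_d$ is the symmetric group on $d$ letters; write $S_d(x)=S_d(x_1,\ldots,x_d)$. Let $R_1^{(d)}$ be the $T$-space generated by $S_d(x)$, and let $R_2^{(d)}$ be the $T$-space generated by $R_1^{(d)}$ together with all products $u\,S_d(v_1,\ldots,v_d)$ with $u\in R_1^{(d)}$, $v_i\in k_0\langle X\rangle$. *)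

theory Defs
  imports Main "HOL-Combinatorics.Permutations"
begin

text \<open>The free associative k-algebra without identity on X = {x_0, x_1, ...}:
  elements are coefficient functions on words (lists of variable indices)
  with finite support and zero coefficient on the empty word.\<close>

type_synonym 'k fa = "nat list \<Rightarrow> 'k"

definition FA :: "'k::field fa set" where
  "FA = {p. finite {w. p w \<noteq> 0} \<and> p [] = 0}"

definition fa_add :: "'k::field fa \<Rightarrow> 'k fa \<Rightarrow> 'k fa" where
  "fa_add p q = (\<lambda>w. p w + q w)"

definition fa_smult :: "'k::field \<Rightarrow> 'k fa \<Rightarrow> 'k fa" where
  "fa_smult c p = (\<lambda>w. c * p w)"

definition fa_zero :: "'k::field fa" where
  "fa_zero = (\<lambda>w. 0)"

definition fa_mult :: "'k::field fa \<Rightarrow> 'k fa \<Rightarrow> 'k fa" where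
  "fa_mult p q = (\<lambda>w. \<Sum>i\<le>length w. p (take i w) * q (drop i w))"

definition fa_var :: "nat \<Rightarrow> 'k::field fa" where
  "fa_var i = (\<lambda>w. if w = [i] then 1 else 0)"

definition fa_endo :: "('k::field fa \<Rightarrow> 'k fa) \<Rightarrow> bool" where
  "fa_endo f \<longleftrightarrow> (\<forall>p\<in>FA. f p \<in> FA)
     \<and> (\<forall>p\<in>FA. \<forall>q\<in>FA. f (fa_add p q) = fa_add (f p) (f q))
     \<and> (\<forall>c. \<forall>p\<in>FA. f (fa_smult c p) = fa_smult c (f p))
     \<and> (\<forall>p\<in>FA. \<forall>q\<in>FA. f (fa_mult p q) = fa_mult (f p) (f q))"

definition fa_subspace :: "'k::field fa set \<Rightarrow> bool" where
  "fa_subspace V \<longleftrightarrow> V \<subseteq> FA \<and> fa_zero \<in> V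
     \<and> (\<forall>p\<in>V. \<forall>q\<in>V. fa_add p q \<in> V)
     \<and> (\<forall>c. \<forall>p\<in>V. fa_smult c p \<in> V)"

definition T_space :: "'k::field fa set \<Rightarrow> bool" where
  "T_space V \<longleftrightarrow> fa_subspace V \<and> (\<forall>f. fa_endo f \<longrightarrow> (\<forall>p\<in>V. f p \<in> V))"

definition T_gen :: "'k::field fa set \<Rightarrow> 'k fa set" where
  "T_gen S = \<Inter>{V. T_space V \<and> S \<subseteq> V}"

definition fa_ideal :: "'k::field fa set \<Rightarrow> bool" where
  "fa_ideal I \<longleftrightarrow> fa_subspace I
     \<and> (\<forall>u\<in>I. \<forall>a\<in>FA. fa_mult a u \<in> I \<and> fa_mult u a \<in> I)"

text \<open>Product of a nonempty list of elements (no identity available).\<close>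
fun fa_prod :: "'k::field fa list \<Rightarrow> 'k fa" where
  "fa_prod [] = fa_zero"
| "fa_prod [v] = v"
| "fa_prod (v # vs) = fa_mult v (fa_prod vs)"

text \<open>S_d(v_1,...,v_d) with arguments indexed 0..d-1: the sum over all
  permutations s of {0..<d} of the ordered product v(s 0) ... v(s (d-1)).\<close>
definition S_poly :: "nat \<Rightarrow> (nat \<Rightarrow> 'k::field fa) \<Rightarrow> 'k fa" where
  "S_poly d v = (\<lambda>w. \<Sum>s\<in>{s. s permutes {..<d}}. fa_prod (map (v \<circ> s) [0..<d]) w)"

definition R1 :: "nat \<Rightarrow> 'k::field fa set" where
  "R1 d = T_gen {S_poly d fa_var}"

definition R2 :: "nat \<Rightarrow> 'k::field fa set" where
  "R2 d = T_gen (R1 d \<union>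
     {fa_mult u (S_poly d v) | u v. u \<in> R1 d \<and> (\<forall>i. v i \<in> FA)})"

end

theory Submission
  imports Defs "HOL-Combinatorics.Multiset_Permutations"
begin

text \<open>
  Write P(f, A) for the sum, over all orderings of a finite set A, of the products of the f i,
  so that S_d(v) = P(v, {0..<d}). Classifying the orderings of A by the right neighbour of a
  fixed a in A (none, or some i that a glues onto) gives
    P(f, A) = P(f, A - {a}) f a + (sum over i in A - {a} of P(f[i := f a f i], A - {a})),
  and summing this over all a in A, where the first terms add up to P(f, A), gives for |A| = d + 1
    d P(f, A) = sum over a in A and i in A - {a} of P(f[i := f a f i], A - {a}),
  a sum of values of S_d. Every value S_d(v) lies in R_1, being the image of S_d(x) under a
  substitution endomorphism; since d is invertible, so does every S_(d+1)(v_0, ..., v_d).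
  The neighbour identity for a = d and f d = u then puts S_d(v) u, and by its mirror image
  also u S_d(v), into R_1. As R_1 is spanned by the values of S_d, it is an ideal, and
  R_2 = R_1 follows. The computations take place in the ring of all noncommutative series
  in the variables, into which the free algebra embeds.
\<close>

section \<open>Symmetrized products\<close>

lemma sum_swap_off_diagonal:
  assumes "finite B"
  shows "(\<Sum>i\<in>B. \<Sum>l\<in>B - {i}. h i l) = (\<Sum>l\<in>B. \<Sum>i\<in>B - {l}. h i l)"
proof -
  have "\<And>i. B - {i} = {l\<in>B. i \<noteq> l}" "\<And>l. B - {l} = {i\<in>B. i \<noteq> l}" by auto
  then show ?thesis using sum.swap_restrict[OF assms assms, of h "(\<noteq>)"] by simp
qed

definition symm_prod :: "('i \<Rightarrow> 'a::semiring_1) \<Rightarrow> 'i set \<Rightarrow> 'a" where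
  "symm_prod f A = (\<Sum>xs\<in>permutations_of_set A. prod_list (map f xs))"

lemma symm_prod_cong: "(\<And>x. x \<in> A \<Longrightarrow> f x = g x) \<Longrightarrow> symm_prod f A = symm_prod g A"
  unfolding symm_prod_def
  by (rule sum.cong[OF refl], rule arg_cong[where f = prod_list], rule map_cong)
     (auto dest: permutations_of_setD)

lemma symm_prod_fun_upd_outside: "i \<notin> A \<Longrightarrow> symm_prod (f(i := c)) A = symm_prod f A"
  by (rule symm_prod_cong) auto

lemma symm_prod_reindex:
  assumes "inj_on h B"
  shows "symm_prod f (h ` B) = symm_prod (f \<circ> h) B"
proof -
  have "inj_on (map h) (permutations_of_set B)"
  proof (rule inj_onI)
    fix xs ys assume "xs \<in> permutations_of_set B" "ys \<in> permutations_of_set B" "map h xs = map h ys"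
    then show "xs = ys"
      using assms by (metis inj_on_map_eq_map permutations_of_setD(1) sup.idem)
  qed
  then show ?thesis
    unfolding symm_prod_def permutations_of_set_image_inj[OF assms]
    by (subst sum.reindex) simp_all
qed

lemma symm_prod_first:
  assumes "finite A" "A \<noteq> {}"
  shows "symm_prod f A = (\<Sum>m\<in>A. f m * symm_prod f (A - {m}))"
proof -
  have "symm_prod f A = (\<Sum>m\<in>A. \<Sum>xs\<in>(#) m ` permutations_of_set (A - {m}). prod_list (map f xs))"
    unfolding symm_prod_def permutations_of_set_nonempty[OF assms(2)]
    by (rule sum.UNION_disjoint) (use assms in auto)
  also have "\<dots> = (\<Sum>m\<in>A. f m * symm_prod f (A - {m}))"
    unfolding symm_prod_def by (simp add: sum.reindex sum_distrib_left)
  finally show ?thesis .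
qed

lemma symm_prod_first_remove:
  assumes "finite A" "a \<in> A"
  shows "symm_prod f A = f a * symm_prod f (A - {a}) + (\<Sum>m\<in>A - {a}. f m * symm_prod f (A - {m}))"
proof -
  have "A \<noteq> {}" using assms(2) by auto
  then show ?thesis using assms by (simp add: symm_prod_first sum.remove)
qed

(* The opposite semiring turns each identity about symm_prod into its mirror image. *)
typedef 'a opp = "UNIV :: 'a set" morphisms unopp opp by auto
setup_lifting type_definition_opp

instantiation opp :: (semiring_1) semiring_1
begin
lift_definition zero_opp :: "'a opp" is 0 .
lift_definition one_opp :: "'a opp" is 1 .
lift_definition plus_opp :: "'a opp \<Rightarrow> 'a opp \<Rightarrow> 'a opp" is "(+)" .
lift_definition times_opp :: "'a opp \<Rightarrow> 'a opp \<Rightarrow> 'a opp" is "\<lambda>x y. y * x" .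
instance
  by standard (transfer; simp add: algebra_simps)+
end

lemma unopp_sum: "unopp (sum f A) = (\<Sum>x\<in>A. unopp (f x))"
  by (induction A rule: infinite_finite_induct) (simp_all add: zero_opp.rep_eq plus_opp.rep_eq)

lemma unopp_prod_list: "unopp (prod_list xs) = prod_list (rev (map unopp xs))"
  by (induction xs) (simp_all add: one_opp.rep_eq times_opp.rep_eq)

lemma unopp_symm_prod: "unopp (symm_prod f A) = symm_prod (unopp \<circ> f) A"
proof -
  have "unopp (symm_prod f A) = (\<Sum>xs\<in>permutations_of_set A. prod_list (map (unopp \<circ> f) (rev xs)))"
    by (simp add: symm_prod_def unopp_sum unopp_prod_list rev_map)
  also have "\<dots> = (\<Sum>xs\<in>rev ` permutations_of_set A. prod_list (map (unopp \<circ> f) xs))"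
    by (subst sum.reindex) (simp_all add: inj_on_def)
  finally show ?thesis by (simp add: symm_prod_def)
qed

lemma symm_prod_last:
  assumes "finite A" "A \<noteq> {}"
  shows "symm_prod f A = (\<Sum>m\<in>A. symm_prod f (A - {m}) * f m)"
  using arg_cong[OF symm_prod_first[OF assms, of "opp \<circ> f"], of unopp]
  by (simp add: unopp_symm_prod unopp_sum times_opp.rep_eq comp_def opp_inverse)

(* Either a comes first, or it directly follows some i, and then the block i a behaves like a
   single letter. *)
lemma symm_prod_glue_left:
  assumes "finite A" "a \<in> A"
  shows "symm_prod f A = f a * symm_prod f (A - {a})
           + (\<Sum>i\<in>A - {a}. symm_prod (f(i := f i * f a)) (A - {a}))"
  using assms
proof (induction "card A" arbitrary: A rule: less_induct)
  case less
  define B where "B = A - {a}"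
  let ?g = "\<lambda>i. f(i := f i * f a)"
  have B: "finite B" "A = insert a B" "a \<notin> B"
    using less.prems by (auto simp: B_def)
  have IH: "symm_prod f (A - {l}) = f a * symm_prod f (B - {l})
      + (\<Sum>i\<in>B - {l}. symm_prod (?g i) (B - {l}))" if "l \<in> B" for l
  proof -
    have "A - {l} - {a} = B - {l}" by (auto simp: B_def)
    moreover have "card (A - {l}) < card A"
      using less.prems that B by (intro card_Diff1_less) auto
    ultimately show ?thesis
      using less.hyps[of "A - {l}"] less.prems that B by auto
  qed
  have first_g: "symm_prod (?g i) B = f i * f a * symm_prod f (B - {i})
      + (\<Sum>l\<in>B - {i}. f l * symm_prod (?g i) (B - {l}))" if "i \<in> B" for i
  proof -
    have "(\<Sum>l\<in>B - {i}. ?g i l * symm_prod (?g i) (B - {l}))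
        = (\<Sum>l\<in>B - {i}. f l * symm_prod (?g i) (B - {l}))"
      by (rule sum.cong) auto
    then show ?thesis
      using symm_prod_first_remove[OF B(1) that, of "?g i"] by (simp add: symm_prod_fun_upd_outside)
  qed
  have "symm_prod f A = f a * symm_prod f B + (\<Sum>l\<in>B. f l * symm_prod f (A - {l}))"
    using less.prems B by (simp add: symm_prod_first B_def[symmetric] sum.insert)
  also have "(\<Sum>l\<in>B. f l * symm_prod f (A - {l}))
      = (\<Sum>l\<in>B. f l * f a * symm_prod f (B - {l}))
        + (\<Sum>l\<in>B. \<Sum>i\<in>B - {l}. f l * symm_prod (?g i) (B - {l}))"
    unfolding sum.distrib[symmetric]
    by (rule sum.cong[OF refl]) (simp only: IH distrib_left sum_distrib_left mult.assoc)
  also have "(\<Sum>l\<in>B. \<Sum>i\<in>B - {l}. f l * symm_prod (?g i) (B - {l}))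
      = (\<Sum>i\<in>B. \<Sum>l\<in>B - {i}. f l * symm_prod (?g i) (B - {l}))"
    by (rule sum_swap_off_diagonal[OF B(1)])
  also have "(\<Sum>l\<in>B. f l * f a * symm_prod f (B - {l})) + \<dots> = (\<Sum>i\<in>B. symm_prod (?g i) B)"
    unfolding sum.distrib[symmetric] by (rule sum.cong[OF refl], erule first_g[symmetric])
  finally show ?case by (simp add: B_def)
qed

lemma symm_prod_glue_right:
  assumes "finite A" "a \<in> A"
  shows "symm_prod f A = symm_prod f (A - {a}) * f a
           + (\<Sum>i\<in>A - {a}. symm_prod (f(i := f a * f i)) (A - {a}))"
proof -
  have "(opp \<circ> f)(i := opp (f i) * opp (f a)) = opp \<circ> f(i := f a * f i)" for i
    by (simp add: fun_eq_iff times_opp.abs_eq)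
  then show ?thesis
    using arg_cong[OF symm_prod_glue_left[OF assms, of "opp \<circ> f"], of unopp]
    by (simp add: unopp_symm_prod unopp_sum plus_opp.rep_eq times_opp.rep_eq comp_def opp_inverse
      fun_upd_def)
qed

lemma symm_prod_eq_glue_sum:
  fixes f :: "'i \<Rightarrow> 'a::semiring_1_cancel"
  assumes "finite A" "card A = Suc d"
  shows "of_nat d * symm_prod f A
           = (\<Sum>m\<in>A. \<Sum>i\<in>A - {m}. symm_prod (f(i := f m * f i)) (A - {m}))"
proof -
  have "A \<noteq> {}" using assms by auto
  have "of_nat (Suc d) * symm_prod f A = (\<Sum>m\<in>A. symm_prod f A)"
    using assms by simp
  also have "\<dots> = (\<Sum>m\<in>A. symm_prod f (A - {m}) * f m
                     + (\<Sum>i\<in>A - {m}. symm_prod (f(i := f m * f i)) (A - {m})))"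
    using assms(1) by (intro sum.cong refl symm_prod_glue_right)
  also have "\<dots> = symm_prod f A + (\<Sum>m\<in>A. \<Sum>i\<in>A - {m}. symm_prod (f(i := f m * f i)) (A - {m}))"
    using symm_prod_last[OF assms(1) \<open>A \<noteq> {}\<close>, of f] by (simp add: sum.distrib)
  finally show ?thesis by (simp add: distrib_right)
qed

section \<open>Noncommutative series in the variables\<close>

definition word_conv :: "(nat list \<Rightarrow> 'k::semiring_0) \<Rightarrow> (nat list \<Rightarrow> 'k) \<Rightarrow> nat list \<Rightarrow> 'k" where
  "word_conv p q = (\<lambda>w. \<Sum>i\<le>length w. p (take i w) * q (drop i w))"

lemma word_conv_assoc: "word_conv (word_conv p q) r = word_conv p (word_conv q r)"
proof
  fix w :: "nat list"
  let ?n = "length w"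
  let ?t = "\<lambda>i j. p (take i w) * q (take j (drop i w)) * r (drop (i + j) w)"
  have "word_conv (word_conv p q) r w = (\<Sum>k\<le>?n. \<Sum>i\<le>k. ?t i (k - i))"
    unfolding word_conv_def
    by (auto simp: sum_distrib_right min_def take_drop intro!: sum.cong)
  also have "\<dots> = (\<Sum>(i, j)\<in>{(i, j). i + j \<le> ?n}. ?t i j)"
    by (rule sum.triangle_reindex_eq[symmetric])
  also have "{(i, j). i + j \<le> ?n} = (SIGMA i:{..?n}. {..?n - i})"
    by auto
  also have "(\<Sum>(i, j)\<in>(SIGMA i:{..?n}. {..?n - i}). ?t i j) = (\<Sum>i\<le>?n. \<Sum>j\<le>?n - i. ?t i j)"
    by (rule sum.Sigma[symmetric]) auto
  also have "\<dots> = word_conv p (word_conv q r) w"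
    unfolding word_conv_def
    by (auto simp: sum_distrib_left mult.assoc add.commute intro!: sum.cong)
  finally show "word_conv (word_conv p q) r w = word_conv p (word_conv q r) w" .
qed

lemma word_conv_one_left: "word_conv (\<lambda>w. if w = [] then 1 else 0) (p :: nat list \<Rightarrow> 'k::semiring_1) = p"
proof
  fix w :: "nat list"
  have "word_conv (\<lambda>w. if w = [] then 1 else 0) p w
      = (\<Sum>i\<in>{0}. (if take i w = [] then 1 else 0) * p (drop i w))"
    unfolding word_conv_def by (rule sum.mono_neutral_right) auto
  then show "word_conv (\<lambda>w. if w = [] then 1 else 0) p w = p w" by simp
qed

lemma word_conv_one_right: "word_conv (p :: nat list \<Rightarrow> 'k::semiring_1) (\<lambda>w. if w = [] then 1 else 0) = p"
proof
  fix w :: "nat list"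
  have "word_conv p (\<lambda>w. if w = [] then 1 else 0) w
      = (\<Sum>i\<in>{length w}. p (take i w) * (if drop i w = [] then 1 else 0))"
    unfolding word_conv_def by (rule sum.mono_neutral_right) auto
  then show "word_conv p (\<lambda>w. if w = [] then 1 else 0) w = p w" by simp
qed

typedef 'k series = "UNIV :: (nat list \<Rightarrow> 'k) set" morphisms coeff series by auto
setup_lifting type_definition_series

instantiation series :: (ring_1) ring_1
begin
lift_definition zero_series :: "'k::ring_1 series" is "\<lambda>w. 0 :: 'k::ring_1" .
lift_definition one_series :: "'k::ring_1 series" is "\<lambda>w. if w = [] then 1 :: 'k::ring_1 else 0" .
lift_definition plus_series :: "'k::ring_1 series \<Rightarrow> 'k series \<Rightarrow> 'k series"
  is "\<lambda>p q w. p w + q w :: 'k::ring_1" .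
lift_definition minus_series :: "'k::ring_1 series \<Rightarrow> 'k series \<Rightarrow> 'k series"
  is "\<lambda>p q w. p w - q w :: 'k::ring_1" .
lift_definition uminus_series :: "'k::ring_1 series \<Rightarrow> 'k series" is "\<lambda>p w. - p w :: 'k::ring_1" .
lift_definition times_series :: "'k::ring_1 series \<Rightarrow> 'k series \<Rightarrow> 'k series" is word_conv .
instance
proof
  fix a b c :: "'k::ring_1 series"
  show "a * b * c = a * (b * c)" by transfer (rule word_conv_assoc)
  show "(a + b) * c = a * c + b * c" by transfer (auto simp: word_conv_def algebra_simps sum.distrib)
  show "a * (b + c) = a * b + a * c" by transfer (auto simp: word_conv_def algebra_simps sum.distrib)
  show "1 * a = a" by transfer (rule word_conv_one_left)
  show "a * 1 = a" by transfer (rule word_conv_one_right)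
  show "a + b + c = a + (b + c)" by transfer (simp add: add.assoc)
  show "a + b = b + a" by transfer (simp add: add.commute)
  show "0 + a = a" by transfer simp
  show "- a + a = 0" by transfer simp
  show "a - b = a + - b" by transfer simp
  show "(0 :: 'k::ring_1 series) \<noteq> 1" by transfer (metis zero_neq_one)
qed
end

lemma series_eqI: "(\<And>w. coeff x w = coeff y w) \<Longrightarrow> x = y"
  by (simp add: coeff_inject[symmetric] fun_eq_iff)

lemma coeff_series [simp]: "coeff (series p) = p"
  by (simp add: series_inverse)

lemma series_coeff [simp]: "series (coeff x) = x"
  by (rule coeff_inverse)

lemma coeff_zero [simp]: "coeff 0 w = 0"
  by (simp add: zero_series.rep_eq)

lemma coeff_one: "coeff 1 w = (if w = [] then 1 else 0)"
  by (simp add: one_series.rep_eq)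

lemma coeff_add [simp]: "coeff (x + y) w = coeff x w + coeff y w"
  by (simp add: plus_series.rep_eq)

lemma coeff_diff [simp]: "coeff (x - y) w = coeff x w - coeff y w"
  by (simp add: minus_series.rep_eq)

lemma coeff_mult: "coeff (x * y) w = (\<Sum>i\<le>length w. coeff x (take i w) * coeff y (drop i w))"
  by (simp add: times_series.rep_eq word_conv_def)

lemma coeff_mult_Nil: "coeff (x * y) [] = coeff x [] * coeff y []"
  by (simp add: coeff_mult)

lemma coeff_sum: "coeff (sum h A) w = (\<Sum>a\<in>A. coeff (h a) w)"
  by (induction A rule: infinite_finite_induct) auto

definition scalar :: "'k::ring_1 \<Rightarrow> 'k series" where
  "scalar c = series (\<lambda>w. if w = [] then c else 0)"

lemma coeff_scalar_mult [simp]: "coeff (scalar c * x) w = c * coeff x w"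
proof -
  have "coeff (scalar c * x) w = (\<Sum>i\<in>{0}. coeff (scalar c) (take i w) * coeff x (drop i w))"
    unfolding coeff_mult by (rule sum.mono_neutral_right) (auto simp: scalar_def)
  then show ?thesis by (simp add: scalar_def)
qed

lemma coeff_mult_scalar [simp]: "coeff (x * scalar c) w = coeff x w * c"
proof -
  have "coeff (x * scalar c) w = (\<Sum>i\<in>{length w}. coeff x (take i w) * coeff (scalar c) (drop i w))"
    unfolding coeff_mult by (rule sum.mono_neutral_right) (auto simp: scalar_def)
  then show ?thesis by (simp add: scalar_def)
qed

lemma scalar_commute: "scalar (c :: 'k::comm_ring_1) * x = x * scalar c"
  by (rule series_eqI) (simp add: mult.commute)

lemma mult_scalar_left_commute: "x * (scalar (c :: 'k::comm_ring_1) * y) = scalar c * (x * y)"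
  by (metis mult.assoc scalar_commute)

lemma scalar_mult: "scalar (c * e) = scalar c * scalar e"
proof (rule series_eqI)
  fix w
  have "coeff (scalar c * scalar e) w = c * coeff (scalar e) w"
    by (rule coeff_scalar_mult)
  then show "coeff (scalar (c * e)) w = coeff (scalar c * scalar e) w"
    by (simp add: scalar_def)
qed

lemma scalar_zero [simp]: "scalar 0 = 0"
  by (rule series_eqI) (simp add: scalar_def)

lemma scalar_add: "scalar (c + e) = scalar c + scalar e"
  by (rule series_eqI) (simp add: scalar_def)

lemma scalar_one [simp]: "scalar 1 = 1"
  by (rule series_eqI) (simp add: scalar_def coeff_one)

lemma scalar_of_nat: "scalar (of_nat n) = of_nat n"
  by (induction n) (simp_all add: scalar_add)

lemma scalar_inverse_of_nat_cancel:
  assumes "(of_nat d :: 'k::field) \<noteq> 0"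
  shows "scalar (1 / of_nat d) * (of_nat d * x) = (x :: 'k series)"
proof -
  have "scalar (1 / of_nat d) * (of_nat d * x) = scalar (1 / of_nat d * of_nat d) * x"
    by (simp only: scalar_of_nat[symmetric] scalar_mult mult.assoc)
  then show ?thesis using assms by simp
qed

section \<open>Finitely supported series and substitution\<close>

definition support :: "'k::ring_1 series \<Rightarrow> nat list set" where
  "support x = {w. coeff x w \<noteq> 0}"

definition finite_series :: "'k::ring_1 series set" where
  "finite_series = {x. finite (support x)}"

lemma zero_in_finite_series [simp]: "0 \<in> finite_series"
  by (simp add: finite_series_def support_def)

lemma one_in_finite_series [simp]: "1 \<in> finite_series"
proof -
  have "support 1 \<subseteq> {[]}" by (auto simp: support_def coeff_one split: if_splits)
  then show ?thesis unfolding finite_series_def by (auto intro: finite_subset)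
qed

lemma add_in_finite_series [simp]: "x \<in> finite_series \<Longrightarrow> y \<in> finite_series \<Longrightarrow> x + y \<in> finite_series"
proof -
  assume "x \<in> finite_series" "y \<in> finite_series"
  moreover have "support (x + y) \<subseteq> support x \<union> support y" by (auto simp: support_def)
  ultimately show ?thesis by (simp add: finite_series_def finite_subset)
qed

lemma mult_in_finite_series [simp]:
  assumes "x \<in> finite_series" "y \<in> finite_series"
  shows "x * y \<in> finite_series"
proof -
  have "support (x * y) \<subseteq> (\<lambda>(a, b). a @ b) ` (support x \<times> support y)"
  proof
    fix w assume "w \<in> support (x * y)"
    then have "(\<Sum>i\<le>length w. coeff x (take i w) * coeff y (drop i w)) \<noteq> 0"
      by (simp add: support_def coeff_mult)
    then obtain i where "coeff x (take i w) * coeff y (drop i w) \<noteq> 0"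
      by (meson sum.not_neutral_contains_not_neutral)
    then have "(take i w, drop i w) \<in> support x \<times> support y" by (auto simp: support_def)
    moreover have "w = (\<lambda>(a, b). a @ b) (take i w, drop i w)" by simp
    ultimately show "w \<in> (\<lambda>(a, b). a @ b) ` (support x \<times> support y)" by (rule rev_image_eqI)
  qed
  with assms show ?thesis by (simp add: finite_series_def finite_subset)
qed

lemma scalar_mult_in_finite_series [simp]: "x \<in> finite_series \<Longrightarrow> scalar c * x \<in> finite_series"
proof -
  assume "x \<in> finite_series"
  moreover have "support (scalar c * x) \<subseteq> support x" by (auto simp: support_def)
  ultimately show ?thesis by (simp add: finite_series_def finite_subset)
qed

lemma sum_in_finite_series [simp]:
  "(\<And>a. a \<in> A \<Longrightarrow> h a \<in> finite_series) \<Longrightarrow> sum h A \<in> finite_series"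
  by (induction A rule: infinite_finite_induct) simp_all

lemma prod_list_in_finite_series: "set xs \<subseteq> finite_series \<Longrightarrow> prod_list xs \<in> finite_series"
  by (induction xs) simp_all

definition monom :: "nat list \<Rightarrow> 'k::ring_1 series" where
  "monom w = series (\<lambda>u. if u = w then 1 else 0)"

lemma coeff_monom: "coeff (monom w) u = (if u = w then 1 else 0)"
  by (simp add: monom_def)

lemma support_monom: "support (monom w) = {w}"
  by (auto simp: support_def coeff_monom)

lemma monom_in_finite_series [simp]: "monom w \<in> finite_series"
  by (simp add: finite_series_def support_monom)

lemma monom_mult: "monom a * monom b = monom (a @ b)"
proof (rule series_eqI)
  fix u
  have "(take i u = a \<and> drop i u = b) \<longleftrightarrow> (i = length a \<and> u = a @ b)" if "i \<le> length u" for i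
    using that by (metis append_eq_conv_conj append_take_drop_id length_take min_absorb2)
  then have "coeff (monom a * monom b) u = (\<Sum>i\<le>length u. if i = length a \<and> u = a @ b then 1 else 0)"
    unfolding coeff_mult coeff_monom by (intro sum.cong) auto
  also have "\<dots> = coeff (monom (a @ b)) u"
    by (auto simp: coeff_monom)
  finally show "coeff (monom a * monom b) u = coeff (monom (a @ b)) u" .
qed

lemma series_expansion:
  assumes "x \<in> finite_series"
  shows "x = (\<Sum>w\<in>support x. scalar (coeff x w) * monom w)"
proof (rule series_eqI)
  fix u
  have "coeff (\<Sum>w\<in>support x. scalar (coeff x w) * monom w) u
      = (\<Sum>w\<in>support x. if u = w then coeff x w else 0)"
    unfolding coeff_sum by (rule sum.cong) (auto simp: coeff_monom)
  also have "\<dots> = coeff x u"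
    using assms by (auto simp: support_def finite_series_def)
  finally show "coeff x u = coeff (\<Sum>w\<in>support x. scalar (coeff x w) * monom w) u" ..
qed

definition subst_word :: "(nat \<Rightarrow> 'k::ring_1 series) \<Rightarrow> nat list \<Rightarrow> 'k series" where
  "subst_word g w = prod_list (map g w)"

definition subst_series :: "(nat \<Rightarrow> 'k::ring_1 series) \<Rightarrow> 'k series \<Rightarrow> 'k series" where
  "subst_series g x = (\<Sum>w\<in>support x. scalar (coeff x w) * subst_word g w)"

lemma subst_series_eq_sum:
  assumes "finite A" "support x \<subseteq> A"
  shows "subst_series g x = (\<Sum>w\<in>A. scalar (coeff x w) * subst_word g w)"
  unfolding subst_series_def
  by (rule sum.mono_neutral_left) (use assms in \<open>auto simp: support_def\<close>)

lemma subst_series_add: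
  assumes "x \<in> finite_series" "y \<in> finite_series"
  shows "subst_series g (x + y) = subst_series g x + subst_series g y"
proof -
  let ?A = "support x \<union> support y"
  have "finite ?A" using assms by (simp add: finite_series_def)
  moreover have "support (x + y) \<subseteq> ?A" by (auto simp: support_def)
  ultimately show ?thesis
    by (simp add: subst_series_eq_sum[of ?A] scalar_add distrib_right sum.distrib)
qed

lemma subst_series_scalar_mult:
  fixes x :: "'k::comm_ring_1 series"
  assumes "x \<in> finite_series"
  shows "subst_series g (scalar c * x) = scalar c * subst_series g x"
proof -
  have "finite (support x)" using assms by (simp add: finite_series_def)
  moreover have "support (scalar c * x) \<subseteq> support x" by (auto simp: support_def)
  ultimately have "subst_series g (scalar c * x)
      = (\<Sum>w\<in>support x. scalar (coeff (scalar c * x) w) * subst_word g w)"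
    by (rule subst_series_eq_sum)
  then show ?thesis
    by (simp add: subst_series_def scalar_mult sum_distrib_left mult.assoc)
qed

lemma subst_series_sum:
  "(\<And>a. a \<in> A \<Longrightarrow> h a \<in> finite_series)
     \<Longrightarrow> subst_series g (sum h A) = (\<Sum>a\<in>A. subst_series g (h a))"
proof (induction A rule: infinite_finite_induct)
  case (insert a A)
  then show ?case by (simp add: subst_series_add)
qed (simp_all add: subst_series_def support_def)

lemma subst_series_monom: "subst_series g (monom w) = subst_word g w"
  by (simp add: subst_series_def support_monom coeff_monom)

lemma subst_series_monom_mult:
  fixes y :: "'k::comm_ring_1 series"
  assumes "y \<in> finite_series"
  shows "subst_series g (monom a * y) = subst_word g a * subst_series g y"
proof -
  have "monom a * y = (\<Sum>w\<in>support y. scalar (coeff y w) * monom (a @ w))"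
    by (subst series_expansion[OF assms])
       (simp add: sum_distrib_left monom_mult mult_scalar_left_commute)
  then have "subst_series g (monom a * y) = (\<Sum>w\<in>support y. scalar (coeff y w) * subst_word g (a @ w))"
    by (simp add: subst_series_sum subst_series_scalar_mult subst_series_monom finite_series_def
        support_def coeff_monom)
  also have "\<dots> = subst_word g a * subst_series g y"
    by (simp add: subst_series_def subst_word_def sum_distrib_left mult.assoc mult_scalar_left_commute)
  finally show ?thesis .
qed

lemma subst_series_mult:
  fixes x y :: "'k::comm_ring_1 series"
  assumes "x \<in> finite_series" "y \<in> finite_series"
  shows "subst_series g (x * y) = subst_series g x * subst_series g y"
proof -
  have "x * y = (\<Sum>w\<in>support x. scalar (coeff x w) * (monom w * y))"
    by (subst series_expansion[OF assms(1)]) (simp add: sum_distrib_right mult.assoc)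
  then have "subst_series g (x * y) = (\<Sum>w\<in>support x. scalar (coeff x w) * (subst_word g w * subst_series g y))"
    using assms(2)
    by (simp add: subst_series_sum subst_series_scalar_mult subst_series_monom_mult)
  also have "\<dots> = subst_series g x * subst_series g y"
    by (simp add: subst_series_def sum_distrib_right mult.assoc)
  finally show ?thesis .
qed

section \<open>The free algebra inside the series ring\<close>

lemma series_fa_zero: "series fa_zero = 0"
  by (rule series_eqI) (simp add: fa_zero_def)

lemma series_fa_add: "series (fa_add p q) = series p + series q"
  by (rule series_eqI) (simp add: fa_add_def)

lemma series_fa_smult: "series (fa_smult c p) = scalar c * series p"
  by (rule series_eqI) (simp add: fa_smult_def)

lemma series_fa_mult: "series (fa_mult p q) = series p * series q"
  by (rule series_eqI) (simp add: fa_mult_def coeff_mult)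

lemma series_fa_var: "series (fa_var i) = monom [i]"
  by (simp add: fa_var_def monom_def)

lemma coeff_zero_eq_fa_zero: "coeff 0 = fa_zero"
  by (simp add: fa_zero_def fun_eq_iff)

lemma coeff_add_eq_fa_add: "coeff (x + y) = fa_add (coeff x) (coeff y)"
  by (simp add: fa_add_def fun_eq_iff)

lemma coeff_scalar_mult_eq_fa_smult: "coeff (scalar c * x) = fa_smult c (coeff x)"
  by (simp add: fa_smult_def fun_eq_iff)

lemma coeff_mult_eq_fa_mult: "coeff (x * y) = fa_mult (coeff x) (coeff y)"
  by (simp add: fa_mult_def fun_eq_iff coeff_mult)

definition FA_series :: "'k::field series set" where
  "FA_series = {x. coeff x \<in> FA}"

lemma series_in_FA_series_iff [simp]: "series p \<in> FA_series \<longleftrightarrow> p \<in> FA"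
  by (simp add: FA_series_def)

lemma FA_series_iff: "x \<in> FA_series \<longleftrightarrow> x \<in> finite_series \<and> coeff x [] = 0"
  by (simp add: FA_series_def FA_def finite_series_def support_def)

lemma FA_series_subset: "FA_series \<subseteq> finite_series"
  by (auto simp: FA_series_iff)

lemma zero_in_FA_series: "0 \<in> FA_series"
  by (simp add: FA_series_iff)

lemma add_in_FA_series: "x \<in> FA_series \<Longrightarrow> y \<in> FA_series \<Longrightarrow> x + y \<in> FA_series"
  by (simp add: FA_series_iff)

lemma scalar_mult_in_FA_series: "x \<in> FA_series \<Longrightarrow> scalar c * x \<in> FA_series"
  by (simp add: FA_series_iff)

lemma mult_in_FA_series_left: "x \<in> FA_series \<Longrightarrow> y \<in> finite_series \<Longrightarrow> x * y \<in> FA_series"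
  by (simp add: FA_series_iff coeff_mult_Nil)

lemma mult_in_FA_series: "x \<in> FA_series \<Longrightarrow> y \<in> FA_series \<Longrightarrow> x * y \<in> FA_series"
  using FA_series_subset by (blast intro: mult_in_FA_series_left)

lemma sum_in_FA_series: "(\<And>a. a \<in> A \<Longrightarrow> h a \<in> FA_series) \<Longrightarrow> sum h A \<in> FA_series"
  by (induction A rule: infinite_finite_induct) (auto simp: zero_in_FA_series add_in_FA_series)

lemma FA_zero: "fa_zero \<in> FA"
  using zero_in_FA_series by (simp flip: series_in_FA_series_iff add: series_fa_zero)

lemma FA_add: "p \<in> FA \<Longrightarrow> q \<in> FA \<Longrightarrow> fa_add p q \<in> FA"
  by (simp flip: series_in_FA_series_iff add: series_fa_add add_in_FA_series)

lemma FA_smult: "p \<in> FA \<Longrightarrow> fa_smult c p \<in> FA"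
  by (simp flip: series_in_FA_series_iff add: series_fa_smult scalar_mult_in_FA_series)

lemma FA_mult: "p \<in> FA \<Longrightarrow> q \<in> FA \<Longrightarrow> fa_mult p q \<in> FA"
  by (simp flip: series_in_FA_series_iff add: series_fa_mult mult_in_FA_series)

lemma FA_var: "fa_var i \<in> FA"
  by (simp flip: series_in_FA_series_iff add: series_fa_var FA_series_iff coeff_monom)

lemma subst_word_in_FA_series:
  assumes "\<And>i. g i \<in> FA_series" "w \<noteq> []"
  shows "subst_word g w \<in> FA_series"
proof -
  obtain i w' where "w = i # w'" using assms(2) by (cases w) auto
  moreover have "set (map g w') \<subseteq> finite_series"
    using assms(1) FA_series_subset by auto
  then have "prod_list (map g w') \<in> finite_series"
    by (rule prod_list_in_finite_series)
  ultimately show ?thesis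
    using assms(1) by (simp add: subst_word_def mult_in_FA_series_left)
qed

lemma subst_series_in_FA_series:
  assumes "\<And>i. g i \<in> FA_series" "x \<in> FA_series"
  shows "subst_series g x \<in> FA_series"
proof -
  have "[] \<notin> support x" using assms(2) by (simp add: FA_series_iff support_def)
  then show ?thesis
    unfolding subst_series_def
    by (intro sum_in_FA_series scalar_mult_in_FA_series subst_word_in_FA_series assms(1)) auto
qed

definition fa_subst :: "(nat \<Rightarrow> 'k::field fa) \<Rightarrow> 'k fa \<Rightarrow> 'k fa" where
  "fa_subst g p = coeff (subst_series (series \<circ> g) (series p))"

lemma fa_subst_var: "fa_subst g (fa_var i) = g i"
  by (simp add: fa_subst_def series_fa_var subst_series_monom subst_word_def)

lemma fa_endo_fa_subst:
  fixes g :: "nat \<Rightarrow> 'k::field fa"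
  assumes "\<And>i. g i \<in> FA"
  shows "fa_endo (fa_subst g)"
proof -
  let ?F = "\<lambda>p. subst_series (series \<circ> g) (series p)"
  have g: "(series \<circ> g) i \<in> FA_series" for i using assms by simp
  show ?thesis
    unfolding fa_endo_def fa_subst_def
  proof (intro conjI ballI allI)
    fix p :: "'k fa" assume "p \<in> FA"
    then have "?F p \<in> FA_series"
      using g by (intro subst_series_in_FA_series) simp_all
    then show "coeff (?F p) \<in> FA"
      by (simp add: FA_series_def)
  next
    fix p q :: "'k fa" assume "p \<in> FA" "q \<in> FA"
    then have "series p \<in> finite_series" "series q \<in> finite_series"
      using FA_series_subset by auto
    then show "coeff (?F (fa_add p q)) = fa_add (coeff (?F p)) (coeff (?F q))"
      and "coeff (?F (fa_mult p q)) = fa_mult (coeff (?F p)) (coeff (?F q))"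
      by (simp_all add: series_fa_add series_fa_mult subst_series_add subst_series_mult
          coeff_add_eq_fa_add coeff_mult_eq_fa_mult)
  next
    fix c and p :: "'k fa" assume "p \<in> FA"
    then have "series p \<in> finite_series" using FA_series_subset by auto
    then show "coeff (?F (fa_smult c p)) = fa_smult c (coeff (?F p))"
      by (simp add: series_fa_smult subst_series_scalar_mult coeff_scalar_mult_eq_fa_smult)
  qed
qed

section \<open>Endomorphisms and the polynomials S_d\<close>

lemma fa_endo_zero:
  assumes "fa_endo f"
  shows "f fa_zero = fa_zero"
proof -
  have "f (fa_add fa_zero fa_zero) = fa_add (f fa_zero) (f fa_zero)"
    using assms FA_zero unfolding fa_endo_def by blast
  moreover have "fa_add fa_zero fa_zero = fa_zero" by (simp add: fa_add_def fa_zero_def)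
  ultimately have "f fa_zero w = f fa_zero w + f fa_zero w" for w by (metis fa_add_def)
  then have "f fa_zero w = 0" for w by (metis add_cancel_right_right)
  then show ?thesis by (simp add: fa_zero_def fun_eq_iff)
qed

lemma FA_sum: "finite S \<Longrightarrow> (\<And>s. s \<in> S \<Longrightarrow> h s \<in> FA) \<Longrightarrow> (\<lambda>w. \<Sum>s\<in>S. h s w) \<in> FA"
proof (induction S rule: finite_induct)
  case (insert s S)
  then show ?case using FA_add[of "h s" "\<lambda>w. \<Sum>s\<in>S. h s w"] by (simp add: fa_add_def)
qed (simp add: FA_zero[unfolded fa_zero_def])

lemma fa_endo_sum:
  assumes "fa_endo f" "finite S" "\<And>s. s \<in> S \<Longrightarrow> h s \<in> FA"
  shows "f (\<lambda>w. \<Sum>s\<in>S. h s w) = (\<lambda>w. \<Sum>s\<in>S. f (h s) w)"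
  using assms(2,3)
proof (induction S rule: finite_induct)
  case empty
  then show ?case using fa_endo_zero[OF assms(1)] by (simp add: fa_zero_def)
next
  case (insert s S)
  have "(\<lambda>w. \<Sum>s\<in>insert s S. h s w) = fa_add (h s) (\<lambda>w. \<Sum>s\<in>S. h s w)"
    using insert.hyps by (simp add: fa_add_def)
  moreover have "h s \<in> FA" "(\<lambda>w. \<Sum>s\<in>S. h s w) \<in> FA"
    using insert by (auto intro: FA_sum)
  ultimately show ?case
    using assms(1) insert by (simp add: fa_endo_def fa_add_def)
qed

lemma FA_fa_prod: "vs \<noteq> [] \<Longrightarrow> set vs \<subseteq> FA \<Longrightarrow> fa_prod vs \<in> FA"
  by (induction vs rule: fa_prod.induct) (auto simp: FA_mult)

lemma fa_endo_fa_prod: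
  assumes "fa_endo f" "vs \<noteq> []" "set vs \<subseteq> FA"
  shows "f (fa_prod vs) = fa_prod (map f vs)"
  using assms(2,3)
proof (induction vs rule: fa_prod.induct)
  case (3 v v' vs)
  then have "fa_prod (v' # vs) \<in> FA" by (intro FA_fa_prod) auto
  with 3 assms(1) show ?case by (simp add: fa_endo_def)
qed auto

lemma series_fa_prod: "vs \<noteq> [] \<Longrightarrow> series (fa_prod vs) = prod_list (map series vs)"
  by (induction vs rule: fa_prod.induct) (simp_all add: series_fa_mult)

lemma sum_permutes_eq_sum_permutations_of_set:
  "(\<Sum>s | s permutes {..<d}. G (map s [0..<d])) = (\<Sum>xs\<in>permutations_of_set {..<d}. G xs)"
proof (rule sum.reindex_bij_witness[where i = "\<lambda>xs j. if j < d then xs ! j else j"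
      and j = "\<lambda>s. map s [0..<d]"])
  fix s assume "s \<in> {s. s permutes {..<d}}"
  then have s: "s permutes {..<d}" by simp
  show "(\<lambda>j. if j < d then map s [0..<d] ! j else j) = s"
    using s by (auto simp: permutes_def fun_eq_iff)
  have "distinct (map s [0..<d])"
    using permutes_inj_on[OF s] by (simp add: distinct_map inj_on_subset atLeast0LessThan)
  moreover have "set (map s [0..<d]) = {..<d}"
    using s by (simp add: atLeast0LessThan permutes_image)
  ultimately show "map s [0..<d] \<in> permutations_of_set {..<d}" by auto
next
  fix xs assume xs: "xs \<in> permutations_of_set {..<d}"
  then have set: "set xs = {..<d}" and dis: "distinct xs" by (auto dest: permutations_of_setD)
  then have len: "length xs = d" using distinct_card by fastforce
  then show "map (\<lambda>j. if j < d then xs ! j else j) [0..<d] = xs"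
    by (simp add: list_eq_iff_nth_eq)
  have "bij_betw ((!) xs) {..<d} {..<d}"
    using bij_betw_nth[OF dis, of "{..<d}"] len set by (simp add: lessThan_def)
  then have "bij_betw (\<lambda>j. if j < d then xs ! j else j) {..<d} {..<d}"
    by (rule bij_betw_cong[THEN iffD1, rotated]) auto
  then have "(\<lambda>j. if j < d then xs ! j else j) permutes {..<d}"
    by (rule bij_imp_permutes) auto
  then show "(\<lambda>j. if j < d then xs ! j else j) \<in> {s. s permutes {..<d}}" by simp
qed simp

lemma series_sum: "series (\<lambda>w. \<Sum>s\<in>S. h s w) = (\<Sum>s\<in>S. series (h s))"
  by (rule series_eqI) (simp add: coeff_sum)

(* d > 0 matters: the empty product fa_prod [] is fa_zero, not a unit. *)
lemma series_S_poly:
  assumes "d > 0"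
  shows "series (S_poly d v) = symm_prod (series \<circ> v) {..<d}"
proof -
  have "series (S_poly d v) = (\<Sum>s | s permutes {..<d}. prod_list (map (series \<circ> v) (map s [0..<d])))"
    using assms by (simp add: S_poly_def series_sum series_fa_prod map_map comp_assoc)
  then show ?thesis
    using sum_permutes_eq_sum_permutations_of_set[where G = "\<lambda>xs. prod_list (map (series \<circ> v) xs)"]
    by (simp add: symm_prod_def map_map comp_assoc)
qed

lemma fa_endo_S_poly:
  assumes "fa_endo f" "d > 0" "\<And>i. v i \<in> FA"
  shows "f (S_poly d v) = S_poly d (f \<circ> v)"
proof -
  have prod_in_FA: "fa_prod (map (v \<circ> s) [0..<d]) \<in> FA" for s
    using assms by (intro FA_fa_prod) auto
  have "f (S_poly d v) = (\<lambda>w. \<Sum>s | s permutes {..<d}. f (fa_prod (map (v \<circ> s) [0..<d])) w)"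
    unfolding S_poly_def by (rule fa_endo_sum[OF assms(1) finite_permutations prod_in_FA]) simp
  also have "\<dots> = S_poly d (f \<circ> v)"
    unfolding S_poly_def using assms by (subst fa_endo_fa_prod) (auto simp: comp_assoc)
  finally show ?thesis .
qed

lemma S_poly_in_FA: "d > 0 \<Longrightarrow> (\<And>i. v i \<in> FA) \<Longrightarrow> S_poly d v \<in> FA"
  unfolding S_poly_def by (intro FA_sum FA_fa_prod finite_permutations) auto

lemma T_space_FA: "T_space FA"
  by (simp add: T_space_def fa_subspace_def fa_endo_def FA_zero FA_add FA_smult)

lemma T_gen_superset: "S \<subseteq> T_gen S"
  by (auto simp: T_gen_def)

lemma T_gen_least: "T_space V \<Longrightarrow> S \<subseteq> V \<Longrightarrow> T_gen S \<subseteq> V"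
  by (auto simp: T_gen_def)

lemma T_space_T_gen:
  assumes "S \<subseteq> FA"
  shows "T_space (T_gen S)"
proof -
  have "T_gen S \<subseteq> FA" using T_gen_least[OF T_space_FA assms] .
  then show ?thesis
    unfolding T_space_def fa_subspace_def T_gen_def by (auto simp: T_space_def fa_subspace_def)
qed

lemma T_space_R1: "d > 0 \<Longrightarrow> T_space (R1 d)"
  unfolding R1_def by (rule T_space_T_gen) (simp add: S_poly_in_FA FA_var)

lemma S_poly_in_R1:
  fixes v :: "nat \<Rightarrow> 'k::field fa"
  assumes "d > 0" "\<And>i. v i \<in> FA"
  shows "S_poly d v \<in> R1 d"
proof -
  have endo: "fa_endo (fa_subst v)"
    by (rule fa_endo_fa_subst) (rule assms(2))
  have "S_poly d fa_var \<in> (R1 d :: 'k fa set)"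
    unfolding R1_def by (rule subsetD[OF T_gen_superset]) simp
  then have "fa_subst v (S_poly d fa_var) \<in> R1 d"
    using T_space_R1[OF assms(1)] endo by (auto simp: T_space_def)
  moreover have "fa_subst v (S_poly d fa_var) = S_poly d v"
    using fa_endo_S_poly[OF endo assms(1)]
    by (simp add: FA_var comp_def fa_subst_var)
  ultimately show ?thesis by simp
qed

inductive_set S_span :: "nat \<Rightarrow> 'k::field fa set" for d where
  S_poly: "(\<And>i. v i \<in> FA) \<Longrightarrow> S_poly d v \<in> S_span d"
| zero: "fa_zero \<in> S_span d"
| add: "p \<in> S_span d \<Longrightarrow> q \<in> S_span d \<Longrightarrow> fa_add p q \<in> S_span d"
| smult: "p \<in> S_span d \<Longrightarrow> fa_smult c p \<in> S_span d"

definition R1_series :: "nat \<Rightarrow> 'k::field series set" where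
  "R1_series d = {x. coeff x \<in> R1 d}"

context
  fixes d :: nat
  assumes d_pos: "d > 0"
begin

lemma S_span_subset_FA: "S_span d \<subseteq> (FA :: 'k::field fa set)"
proof
  fix p assume "p \<in> S_span d"
  then show "p \<in> FA"
    by induction (auto simp: S_poly_in_FA[OF d_pos] FA_zero FA_add FA_smult)
qed

lemma T_space_S_span: "T_space (S_span d :: 'k::field fa set)"
  unfolding T_space_def fa_subspace_def
proof (intro conjI allI impI ballI S_span_subset_FA S_span.zero S_span.add S_span.smult)
  fix f :: "'k fa \<Rightarrow> 'k fa" and p :: "'k fa" assume f: "fa_endo f" and p: "p \<in> S_span d"
  from p show "f p \<in> S_span d"
  proof induction
    case (S_poly v)
    moreover have "(f \<circ> v) i \<in> FA" for i using f S_poly by (simp add: fa_endo_def)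
    ultimately show ?case using fa_endo_S_poly[OF f d_pos] by (simp add: S_span.S_poly)
  next
    case zero
    then show ?case using fa_endo_zero[OF f] by (simp add: S_span.zero)
  next
    case (add p q)
    then have "p \<in> FA" "q \<in> FA" using S_span_subset_FA[where 'k = 'k] by auto
    with add f show ?case by (simp add: fa_endo_def S_span.add)
  next
    case (smult p c)
    then have "p \<in> FA" using S_span_subset_FA[where 'k = 'k] by auto
    with smult f show ?case by (simp add: fa_endo_def S_span.smult)
  qed
qed

lemma R1_subset_S_span: "R1 d \<subseteq> (S_span d :: 'k::field fa set)"
  unfolding R1_def by (rule T_gen_least[OF T_space_S_span]) (simp add: S_span.S_poly FA_var)

lemma R1_subspace: "fa_subspace (R1 d :: 'k::field fa set)"
  using T_space_R1[OF d_pos, where 'a = 'k] by (simp add: T_space_def)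

lemma zero_in_R1_series: "(0 :: 'k::field series) \<in> R1_series d"
  using R1_subspace[where 'k = 'k] by (simp add: R1_series_def fa_subspace_def coeff_zero_eq_fa_zero)

lemma add_in_R1_series: "(x :: 'k::field series) \<in> R1_series d \<Longrightarrow> y \<in> R1_series d \<Longrightarrow> x + y \<in> R1_series d"
  using R1_subspace[where 'k = 'k] by (simp add: R1_series_def fa_subspace_def coeff_add_eq_fa_add)

lemma scalar_mult_in_R1_series: "(x :: 'k::field series) \<in> R1_series d \<Longrightarrow> scalar c * x \<in> R1_series d"
  using R1_subspace[where 'k = 'k]
  by (simp add: R1_series_def fa_subspace_def coeff_scalar_mult_eq_fa_smult)

lemma diff_in_R1_series:
  fixes x y :: "'k::field series"
  assumes "x \<in> R1_series d" "y \<in> R1_series d"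
  shows "x - y \<in> R1_series d"
proof -
  have "x + scalar (- 1) * y \<in> R1_series d"
    using assms by (intro add_in_R1_series scalar_mult_in_R1_series)
  moreover have "x + scalar (- 1) * y = x - y" by (rule series_eqI) simp
  ultimately show ?thesis by (simp only:)
qed

lemma sum_in_R1_series:
  fixes h :: "'a \<Rightarrow> 'k::field series"
  shows "(\<And>a. a \<in> A \<Longrightarrow> h a \<in> R1_series d) \<Longrightarrow> sum h A \<in> R1_series d"
  by (induction A rule: infinite_finite_induct) (auto simp: zero_in_R1_series add_in_R1_series)

lemma symm_prod_in_R1_series:
  fixes h :: "'a \<Rightarrow> 'k::field series"
  assumes "finite B" "card B = d" "\<And>i. h i \<in> FA_series"
  shows "symm_prod h B \<in> R1_series d"
proof -
  obtain e where e: "bij_betw e {..<d} B"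
    using ex_bij_betw_nat_finite[OF assms(1)] assms(2) by (auto simp: atLeast0LessThan)
  define v where "v i = coeff (h (e i))" for i
  have "symm_prod h B = symm_prod (h \<circ> e) {..<d}"
    using e by (auto simp: bij_betw_def symm_prod_reindex)
  also have "\<dots> = series (S_poly d v)"
    by (simp add: series_S_poly[OF d_pos] v_def comp_def)
  finally have "symm_prod h B = series (S_poly d v)" .
  moreover have "v i \<in> FA" for i
    using assms(3) by (simp add: v_def FA_series_def)
  then have "S_poly d v \<in> R1 d"
    using d_pos by (intro S_poly_in_R1)
  ultimately show ?thesis by (simp add: R1_series_def)
qed

context
  fixes k :: "'k::field itself"
  assumes char: "(of_nat d :: 'k) \<noteq> 0"
begin

lemma symm_prod_atMost_in_R1_series:
  fixes f :: "nat \<Rightarrow> 'k series"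
  assumes f: "\<And>i. f i \<in> FA_series"
  shows "symm_prod f {..d} \<in> R1_series d"
proof -
  have "of_nat d * symm_prod f {..d} \<in> R1_series d"
    unfolding symm_prod_eq_glue_sum[of "{..d}" d f, simplified]
    using f by (intro sum_in_R1_series symm_prod_in_R1_series) (auto simp: mult_in_FA_series)
  then have "scalar (1 / of_nat d) * (of_nat d * symm_prod f {..d}) \<in> R1_series d"
    by (rule scalar_mult_in_R1_series)
  then show ?thesis using scalar_inverse_of_nat_cancel[OF char] by simp
qed

lemma mult_S_poly_in_R1_series:
  fixes x :: "'k series"
  assumes v: "\<And>i. v i \<in> FA" and x: "x \<in> FA_series"
  shows "x * series (S_poly d v) \<in> R1_series d" and "series (S_poly d v) * x \<in> R1_series d"
proof -
  define f where "f = (series \<circ> v)(d := x)"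
  have f: "f i \<in> FA_series" for i using v x by (simp add: f_def)
  have S: "series (S_poly d v) = symm_prod f {..<d}"
    unfolding series_S_poly[OF d_pos] by (rule symm_prod_cong) (simp add: f_def)
  have "{..d} - {d} = {..<d}" by auto
  then have left: "symm_prod f {..d} = x * series (S_poly d v)
        + (\<Sum>i\<in>{..<d}. symm_prod (f(i := f i * f d)) {..<d})"
    and right: "symm_prod f {..d} = series (S_poly d v) * x
        + (\<Sum>i\<in>{..<d}. symm_prod (f(i := f d * f i)) {..<d})"
    using symm_prod_glue_left[of "{..d}" d f] symm_prod_glue_right[of "{..d}" d f]
    by (simp_all add: S f_def)
  have glued: "(\<Sum>i\<in>{..<d}. symm_prod (f(i := g i)) {..<d}) \<in> R1_series d"
    if "\<And>i. g i \<in> FA_series" for g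
    using f that by (intro sum_in_R1_series symm_prod_in_R1_series) auto
  have all: "symm_prod f {..d} \<in> R1_series d"
    by (rule symm_prod_atMost_in_R1_series) (rule f)
  show "x * series (S_poly d v) \<in> R1_series d"
    using diff_in_R1_series[OF all glued[of "\<lambda>i. f i * f d"]] f
    by (simp add: left mult_in_FA_series)
  show "series (S_poly d v) * x \<in> R1_series d"
    using diff_in_R1_series[OF all glued[of "\<lambda>i. f d * f i"]] f
    by (simp add: right mult_in_FA_series)
qed

end

end

lemma fa_ideal_R1:
  assumes "d > 0" "(of_nat d :: 'k::field) \<noteq> 0"
  shows "fa_ideal (R1 d :: 'k fa set)"
  unfolding fa_ideal_def
proof (intro conjI ballI)
  show "fa_subspace (R1 d :: 'k fa set)" by (rule R1_subspace[OF assms(1)])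
  fix u a :: "'k fa" assume "u \<in> R1 d" and a: "a \<in> FA"
  then have "u \<in> S_span d" using R1_subset_S_span[OF assms(1)] by blast
  then have "series a * series u \<in> R1_series d \<and> series u * series a \<in> R1_series d"
  proof induction
    case (S_poly v)
    then show ?case using a mult_S_poly_in_R1_series[OF assms] by simp
  next
    case zero
    then show ?case by (simp add: series_fa_zero zero_in_R1_series[OF assms(1)])
  next
    case (add p q)
    then show ?case by (simp add: series_fa_add distrib_left distrib_right add_in_R1_series[OF assms(1)])
  next
    case (smult p c)
    then show ?case
      by (simp add: series_fa_smult mult_scalar_left_commute mult.assoc scalar_mult_in_R1_series[OF assms(1)])
  qed
  then show "fa_mult a u \<in> R1 d" "fa_mult u a \<in> R1 d"
    by (simp_all add: R1_series_def coeff_mult_eq_fa_mult)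
qed

theorem mainTheorem2:
  fixes d :: nat
  assumes "d > 0" and "(of_nat d :: 'k::field) \<noteq> 0"
  shows "fa_ideal (R1 d :: 'k fa set) \<and> (R1 d :: 'k fa set) = R2 d"
proof
  show ideal: "fa_ideal (R1 d :: 'k fa set)"
    using assms by (rule fa_ideal_R1)
  have "R1 d \<union> {fa_mult u (S_poly d v) | u v. u \<in> R1 d \<and> (\<forall>i. v i \<in> FA)} \<subseteq> (R1 d :: 'k fa set)"
    using ideal S_poly_in_FA[OF assms(1)] by (auto simp: fa_ideal_def)
  then show "R1 d = (R2 d :: 'k fa set)"
    unfolding R2_def using T_gen_superset T_gen_least[OF T_space_R1[OF assms(1)]] by blast
qed

end
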